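(* Let $d\ge1$ and let $X_1,\dots,X_d$ be non-negative integrable random variables that are pairwise independent. Let $\tilde X_1,\dots,\tilde X_d$ be mutually independent with $\tilde X_i$ equal in distribution to $X_i$. Then $\mathbb{E}\max_{i\in[d]}X_i\ge\frac12\mathbb{E}\max_{i\in[d]}\tilde X_i$.
   Context: $[d]=\{1,\dots,d\}$. *)

theory Defs
  imports "HOL-Probability.Probability"
begin

end

theory Submission
  imports Defs
begin

(* By the layer-cake formula E Z = \<integral>\<^sub>0\<^sup>\<infinity> P(Z > t) dt it suffices to compare the tails of
   the two maxima at every level t. Let S = \<Sum>\<^sub>i P(X\<^sub>i > t). For the copies, the union bound gives
   P(max Xt > t) \<le> min(1, S). For the pairwise independent X\<^sub>i, the second moment of the number
   of exceedances Z = \<Sum>\<^sub>i 1{X\<^sub>i > t} is at most S + S\<^sup>2, whence P(max X > t) \<ge> S/(1 + S)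
   \<ge> min(1, S)/2. *)

lemma nn_integral_layer_cake:
  fixes f :: "'a \<Rightarrow> real"
  assumes "sigma_finite_measure M" and [measurable]: "f \<in> borel_measurable M"
  shows "(\<integral>\<^sup>+x. ennreal (f x) \<partial>M) = (\<integral>\<^sup>+t\<in>{0..}. emeasure M {x\<in>space M. t < f x} \<partial>lborel)"
proof -
  interpret pair_sigma_finite M lborel
    using assms(1) by (intro pair_sigma_finite.intro) (auto intro: lborel.sigma_finite_measure_axioms)
  have "ennreal (f x) = (\<integral>\<^sup>+t. indicator {0..<f x} t \<partial>lborel)" for x
    by (cases "0 \<le> f x") (auto simp: ennreal_neg)
  then have "(\<integral>\<^sup>+x. ennreal (f x) \<partial>M) = (\<integral>\<^sup>+x. \<integral>\<^sup>+t. indicator {0..<f x} t \<partial>lborel \<partial>M)"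
    by simp
  also have "\<dots> = (\<integral>\<^sup>+t. \<integral>\<^sup>+x. indicator {0..<f x} t \<partial>M \<partial>lborel)"
    by (rule Fubini'[symmetric]) (simp add: indicator_def split_beta')
  also have "\<dots> = (\<integral>\<^sup>+t\<in>{0..}. emeasure M {x\<in>space M. t < f x} \<partial>lborel)"
  proof (intro nn_integral_cong)
    fix t :: real
    have "(\<integral>\<^sup>+x. indicator {0..<f x} t \<partial>M) = (\<integral>\<^sup>+x. indicator {x\<in>space M. t < f x} x * indicator {0..} t \<partial>M)"
      by (intro nn_integral_cong) (auto simp: indicator_def)
    then show "(\<integral>\<^sup>+x. indicator {0..<f x} t \<partial>M) = emeasure M {x\<in>space M. t < f x} * indicator {0..} t"
      by (simp add: nn_integral_multc)
  qed
  finally show ?thesis .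
qed

lemma integral_le_enn2real_nn_integral:
  fixes f :: "'a \<Rightarrow> real"
  shows "integral\<^sup>L M f \<le> enn2real (\<integral>\<^sup>+x. ennreal (f x) \<partial>M)"
proof (cases "integrable M f")
  case True
  then show ?thesis
    by (simp add: real_lebesgue_integral_def)
qed (simp add: not_integrable_integral_eq)

lemma scaled_integral_le_of_tail_le:
  fixes F :: "'b \<Rightarrow> real" and G :: "'a \<Rightarrow> real" and c :: real
  assumes "finite_measure N" "finite_measure M" and "0 \<le> c"
    and F: "F \<in> borel_measurable N"
    and G: "integrable M G" "AE x in M. 0 \<le> G x"
    and tail_le: "\<And>t. 0 \<le> t \<Longrightarrow> c * measure N {y\<in>space N. t < F y} \<le> measure M {x\<in>space M. t < G x}"
  shows "c * integral\<^sup>L N F \<le> integral\<^sup>L M G"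
proof -
  interpret N: finite_measure N by fact
  interpret M: finite_measure M by fact
  have G_meas: "G \<in> borel_measurable M"
    using G by auto
  have "ennreal c * (\<integral>\<^sup>+y. ennreal (F y) \<partial>N)
      = ennreal c * (\<integral>\<^sup>+t\<in>{0..}. emeasure N {y\<in>space N. t < F y} \<partial>lborel)"
    using F by (simp add: nn_integral_layer_cake N.sigma_finite_measure)
  also have "\<dots> = (\<integral>\<^sup>+t\<in>{0..}. ennreal c * emeasure N {y\<in>space N. t < F y} \<partial>lborel)"
    using F by (subst nn_integral_cmult[symmetric]) (auto simp: mult.assoc)
  also have "\<dots> \<le> (\<integral>\<^sup>+t\<in>{0..}. emeasure M {x\<in>space M. t < G x} \<partial>lborel)"
    using tail_le \<open>0 \<le> c\<close>
    by (intro nn_integral_mono) (auto simp: N.emeasure_eq_measure M.emeasure_eq_measure ennreal_mult[symmetric] indicator_def)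
  also have "\<dots> = ennreal (integral\<^sup>L M G)"
    using G G_meas by (simp add: nn_integral_layer_cake[symmetric] M.sigma_finite_measure nn_integral_eq_integral)
  finally have "ennreal c * (\<integral>\<^sup>+y. ennreal (F y) \<partial>N) \<le> ennreal (integral\<^sup>L M G)" .
  then have "enn2real (ennreal c * (\<integral>\<^sup>+y. ennreal (F y) \<partial>N)) \<le> enn2real (ennreal (integral\<^sup>L M G))"
    by (rule enn2real_mono) simp
  then have "c * enn2real (\<integral>\<^sup>+y. ennreal (F y) \<partial>N) \<le> integral\<^sup>L M G"
    using G \<open>0 \<le> c\<close> by (simp add: enn2real_mult integral_nonneg_AE)
  then show ?thesis
    using \<open>0 \<le> c\<close> integral_le_enn2real_nn_integral[of N F] by (meson mult_left_mono order_trans)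
qed

lemma integrable_Max:
  fixes f :: "'i \<Rightarrow> 'a \<Rightarrow> real"
  assumes "finite I" "I \<noteq> {}" "\<And>i. i \<in> I \<Longrightarrow> integrable M (f i)"
  shows "integrable M (\<lambda>x. Max ((\<lambda>i. f i x) ` I))"
  using assms by (induction I rule: finite_ne_induct) simp_all

lemma (in prob_space) prob_UN_ge_second_moment:
  fixes A :: "'i \<Rightarrow> 'a set"
  assumes I: "finite I" and A: "\<And>i. i \<in> I \<Longrightarrow> A i \<in> events"
    and neg_corr: "\<And>i j. i \<in> I \<Longrightarrow> j \<in> I \<Longrightarrow> i \<noteq> j \<Longrightarrow> prob (A i \<inter> A j) \<le> prob (A i) * prob (A j)"
  defines "S \<equiv> \<Sum>i\<in>I. prob (A i)"
  shows "S / (1 + S) \<le> prob (\<Union>i\<in>I. A i)"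
proof -
  define Z where "Z x = (\<Sum>i\<in>I. indicator (A i) x :: real)" for x
  define c where "c = 1 / (1 + S)"
  have union_event: "(\<Union>i\<in>I. A i) \<in> events"
    using I A by auto
  have "0 \<le> S"
    unfolding S_def by (simp add: sum_nonneg)
  have Z_sq: "Z x ^ 2 = (\<Sum>i\<in>I. \<Sum>j\<in>I. indicator (A i \<inter> A j) x)" for x
    unfolding Z_def by (simp add: power2_eq_square sum_product indicator_inter_arith)
  have Z_integrable: "integrable M Z" "integrable M (\<lambda>x. Z x ^ 2)"
    using A by (simp_all only: Z_sq) (auto simp: Z_def[abs_def] emeasure_eq_measure)
  have EZ: "expectation Z = S"
    unfolding Z_def S_def using A by (simp add: emeasure_eq_measure)
  have "expectation (\<lambda>x. Z x ^ 2) = (\<Sum>i\<in>I. \<Sum>j\<in>I. prob (A i \<inter> A j))"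
    unfolding Z_sq using A by (simp add: emeasure_eq_measure)
  also have "\<dots> \<le> (\<Sum>i\<in>I. \<Sum>j\<in>I. (if i = j then prob (A i) else 0) + prob (A i) * prob (A j))"
    using neg_corr by (intro sum_mono) auto
  also have "\<dots> = S + S ^ 2"
    unfolding S_def by (simp add: sum.distrib I power2_eq_square sum_product)
  finally have EZ_sq: "expectation (\<lambda>x. Z x ^ 2) \<le> S + S ^ 2" .
  \<comment> \<open>The quadratic lies below the indicator of the union; c = 1/(1+S) optimises the resulting bound.\<close>
  have quadratic_le: "2 * c * Z x - c ^ 2 * Z x ^ 2 \<le> indicator (\<Union>i\<in>I. A i) x" for x
  proof (cases "x \<in> (\<Union>i\<in>I. A i)")
    case True
    have "2 * c * Z x - c ^ 2 * Z x ^ 2 = 1 - (1 - c * Z x) ^ 2"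
      by (simp add: power2_eq_square algebra_simps)
    with True show ?thesis by simp
  next
    case False
    then have "Z x = 0" unfolding Z_def by (auto intro!: sum.neutral)
    with False show ?thesis by simp
  qed
  have "S / (1 + S) = 2 * c * S - c ^ 2 * (S + S ^ 2)"
    using \<open>0 \<le> S\<close> unfolding c_def by (simp add: divide_simps power2_eq_square) (simp add: algebra_simps)
  also have "\<dots> \<le> 2 * c * S - c ^ 2 * expectation (\<lambda>x. Z x ^ 2)"
    using EZ_sq by (simp add: mult_left_mono)
  also have "\<dots> = expectation (\<lambda>x. 2 * c * Z x - c ^ 2 * Z x ^ 2)"
    using Z_integrable EZ by simp
  also have "\<dots> \<le> expectation (indicator (\<Union>i\<in>I. A i))"
    using quadratic_le Z_integrable union_event by (intro integral_mono) (auto simp: emeasure_eq_measure)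
  also have "\<dots> = prob (\<Union>i\<in>I. A i)"
    using union_event by simp
  finally show ?thesis .
qed

lemma prob_Max_gt_pairwise_indep_ge_half:
  fixes X :: "'i \<Rightarrow> 'a \<Rightarrow> real" and Y :: "'i \<Rightarrow> 'b \<Rightarrow> real"
  assumes "prob_space M" "prob_space N" and I: "finite I" "I \<noteq> {}"
    and X: "\<And>i. i \<in> I \<Longrightarrow> X i \<in> borel_measurable M"
    and Y: "\<And>i. i \<in> I \<Longrightarrow> Y i \<in> borel_measurable N"
    and same_distr: "\<And>i. i \<in> I \<Longrightarrow> distr N borel (Y i) = distr M borel (X i)"
    and pairwise_indep: "\<And>i j. i \<in> I \<Longrightarrow> j \<in> I \<Longrightarrow> i \<noteq> j \<Longrightarrow>
           prob_space.indep_var M borel (X i) borel (X j)"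
  shows "1/2 * measure N {y\<in>space N. t < Max ((\<lambda>i. Y i y) ` I)}
           \<le> measure M {x\<in>space M. t < Max ((\<lambda>i. X i x) ` I)}"
proof -
  interpret M: prob_space M by fact
  interpret N: prob_space N by fact
  define S where "S = (\<Sum>i\<in>I. M.prob {x\<in>space M. t < X i x})"
  have "0 \<le> S"
    unfolding S_def by (simp add: sum_nonneg)
  have Max_gt_iff: "t < Max ((\<lambda>i. Z i x) ` I) \<longleftrightarrow> (\<exists>i\<in>I. t < Z i x)" for Z :: "'i \<Rightarrow> 'c \<Rightarrow> real" and x
    using I by (simp add: Max_gr_iff)
  have same_tail: "N.prob {y\<in>space N. t < Y i y} = M.prob {x\<in>space M. t < X i x}" if "i \<in> I" for i
  proof -
    have "N.prob {y\<in>space N. t < Y i y} = measure (distr N borel (Y i)) {t<..}"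
      using Y[OF that] by (subst measure_distr) (auto intro!: arg_cong[where f="measure N"])
    also have "\<dots> = measure (distr M borel (X i)) {t<..}"
      using same_distr[OF that] by simp
    also have "\<dots> = M.prob {x\<in>space M. t < X i x}"
      using X[OF that] by (subst measure_distr) (auto intro!: arg_cong[where f="measure M"])
    finally show ?thesis .
  qed
  have "N.prob {y\<in>space N. t < Max ((\<lambda>i. Y i y) ` I)} = N.prob (\<Union>i\<in>I. {y\<in>space N. t < Y i y})"
    by (auto simp: Max_gt_iff intro!: arg_cong[where f="measure _"])
  also have "\<dots> \<le> (\<Sum>i\<in>I. N.prob {y\<in>space N. t < Y i y})"
    using I Y by (intro N.finite_measure_subadditive_finite) auto
  also have "\<dots> = S"
    unfolding S_def using same_tail by simp
  finally have union_bound: "N.prob {y\<in>space N. t < Max ((\<lambda>i. Y i y) ` I)} \<le> S" .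
  have "S / (1 + S) \<le> M.prob (\<Union>i\<in>I. {x\<in>space M. t < X i x})"
    unfolding S_def
  proof (rule M.prob_UN_ge_second_moment)
    fix i j assume ij: "i \<in> I" "j \<in> I" "i \<noteq> j"
    have "M.prob ({x\<in>space M. t < X i x} \<inter> {x\<in>space M. t < X j x})
        = M.prob ((\<lambda>x. (X i x, X j x)) -` ({t<..} \<times> {t<..}) \<inter> space M)"
      by (auto intro!: arg_cong[where f="measure M"])
    also have "\<dots> = M.prob (X i -` {t<..} \<inter> space M) * M.prob (X j -` {t<..} \<inter> space M)"
      using pairwise_indep[OF ij] by (intro M.indep_varD) auto
    also have "\<dots> = M.prob {x\<in>space M. t < X i x} * M.prob {x\<in>space M. t < X j x}"
      by (auto intro!: arg_cong2[where f="(*)"] arg_cong[where f="measure M"])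
    finally show "M.prob ({x\<in>space M. t < X i x} \<inter> {x\<in>space M. t < X j x})
        \<le> M.prob {x\<in>space M. t < X i x} * M.prob {x\<in>space M. t < X j x}" by simp
  qed (use I X in auto)
  also have "\<dots> = M.prob {x\<in>space M. t < Max ((\<lambda>i. X i x) ` I)}"
    by (auto simp: Max_gt_iff intro!: arg_cong[where f="measure _"])
  finally have second_moment_bound: "S / (1 + S) \<le> M.prob {x\<in>space M. t < Max ((\<lambda>i. X i x) ` I)}" .
  have "1/2 * m \<le> S / (1 + S)" if "m \<le> 1" "m \<le> S" for m
    using that \<open>0 \<le> S\<close> mult_right_mono[OF \<open>m \<le> 1\<close> \<open>0 \<le> S\<close>] by (simp add: field_simps)
  with union_bound second_moment_bound show ?thesis
    by (meson N.prob_le_1 order_trans)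
qed

theorem proposition12:
  fixes M :: "'a measure" and N :: "'b measure"
    and X :: "nat \<Rightarrow> 'a \<Rightarrow> real" and Xt :: "nat \<Rightarrow> 'b \<Rightarrow> real"
    and d :: nat
  assumes "prob_space M" and "prob_space N"
    and "d \<ge> 1"
    and integrable: "\<And>i. i \<in> {1..d} \<Longrightarrow> integrable M (X i)"
    and nonneg: "\<And>i x. i \<in> {1..d} \<Longrightarrow> x \<in> space M \<Longrightarrow> X i x \<ge> 0"
    and pairwise_indep: "\<And>i j. i \<in> {1..d} \<Longrightarrow> j \<in> {1..d} \<Longrightarrow> i \<noteq> j \<Longrightarrow>
           prob_space.indep_var M borel (X i) borel (X j)"
    and Xt_rv: "\<And>i. i \<in> {1..d} \<Longrightarrow> Xt i \<in> borel_measurable N"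
    and Xt_indep: "prob_space.indep_vars N (\<lambda>_. borel) Xt {1..d}"
    and same_distr: "\<And>i. i \<in> {1..d} \<Longrightarrow> distr N borel (Xt i) = distr M borel (X i)"
  shows "(\<integral>x. Max ((\<lambda>i. X i x) ` {1..d}) \<partial>M)
           \<ge> 1/2 * (\<integral>y. Max ((\<lambda>i. Xt i y) ` {1..d}) \<partial>N)"
proof -
  interpret M: prob_space M by fact
  interpret N: prob_space N by fact
  have I: "finite {1..d}" "{1..d} \<noteq> {}"
    using \<open>d \<ge> 1\<close> by auto
  show ?thesis
  proof (rule scaled_integral_le_of_tail_le[OF N.finite_measure_axioms M.finite_measure_axioms])
    show "(\<lambda>y. Max ((\<lambda>i. Xt i y) ` {1..d})) \<in> borel_measurable N"
      using I(1) Xt_rv by (rule borel_measurable_Max)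
    show "integrable M (\<lambda>x. Max ((\<lambda>i. X i x) ` {1..d}))"
      using I integrable by (rule integrable_Max)
    show "AE x in M. 0 \<le> Max ((\<lambda>i. X i x) ` {1..d})"
      using I nonneg by (auto simp: Max_ge_iff)
    show "1/2 * N.prob {y\<in>space N. t < Max ((\<lambda>i. Xt i y) ` {1..d})}
        \<le> M.prob {x\<in>space M. t < Max ((\<lambda>i. X i x) ` {1..d})}" for t
      using \<open>prob_space M\<close> \<open>prob_space N\<close> I integrable Xt_rv same_distr pairwise_indep
      by (intro prob_Max_gt_pairwise_indep_ge_half) auto
  qed simp
qed

end
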